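(* Let $n\ge 6$ be even and let $P(n)$ be the number of Latin rows $(s_1,\dots,s_n)$ of length $n$ with $s_1=1$ and inner distance $\frac n2-1$ (equivalently, Hamiltonian paths starting at vertex $1$ in the maximum distance graph). Then $P(n)=\frac14n^2+2$ if $n\equiv 0\pmod 4$, and $P(n)=\frac14 n^2+1$ if $n\equiv 2\pmod 4$.
   Context: For $a,b\in[1,n]$, $\mathrm{dist}(a,b)$ is the minimum of the residues of $a-b$ and $b-a$ modulo $n$ (in $[0,n-1]$). A Latin row of length $n$ is a permutation $(s_1,\dots,s_n)$ of $[1,n]$; its inner distance is $\min_{1\le j\le n-1}\mathrm{dist}(s_j,s_{j+1})$. The maximum distance graph has vertex set $[1,n]$ and an edge between $x\ne y$ whenever $\mathrm{dist}(x,y)\ge\lfloor\frac{n-1}2\rfloor$. *)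

theory Defs
  imports Main
begin

definition cdist :: "nat \<Rightarrow> nat \<Rightarrow> nat \<Rightarrow> nat" where
  "cdist n a b = nat (min ((int a - int b) mod int n) ((int b - int a) mod int n))"

definition latin_row :: "nat \<Rightarrow> nat list \<Rightarrow> bool" where
  "latin_row n s \<longleftrightarrow> length s = n \<and> distinct s \<and> set s = {1..n}"

definition inner_distance :: "nat \<Rightarrow> nat list \<Rightarrow> nat" where
  "inner_distance n s = Min {cdist n (s ! j) (s ! (j+1)) | j. j + 1 < length s}"

definition P :: "nat \<Rightarrow> nat" where
  "P n = card {s. latin_row n s \<and> s ! 0 = 1 \<and> inner_distance n s = n div 2 - 1}"

end

theory Submission
  imports Defs
begin

(*
  For n = 2h every circular distance is at most h, and two consecutive steps of length h
  lead back to the starting point. So a Latin row has inner distance h - 1 exactly when all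
  its steps have length h - 1 or h, i.e. when it is a Hamiltonian path of the maximum
  distance graph. Putting x and x + h into one column and letting the row alternate along
  each half of [1, n] turns this graph into a ladder with h rungs whose two closing edges
  cross over iff h is even: a prism for odd h, a Moebius ladder for even h.

  Hamiltonian paths from a corner of the ladder are counted by following their first moves.
  Taking the rung first leaves a strip of h - 1 columns, entered at one of its two ends, with
  h - 1 Hamiltonian paths from either corner. Running along the lower rail up to column b and
  taking the rung there leaves max (h - 1 - b) 1 completions plus one more, which must leave
  the last column across a closing edge and therefore exists only for the right parity of
  h - b. The third first move is the mirror image of the second. Altogether a corner has
  h^2 + 1 + [h even] Hamiltonian paths.
*)

section \<open>Counting Hamiltonian paths\<close>

lemma successively_conv_nth:
  "successively R xs \<longleftrightarrow> (\<forall>i. Suc i < length xs \<longrightarrow> R (xs ! i) (xs ! Suc i))"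
  by (induction R xs rule: successively.induct) (auto simp: nth_Cons split: nat.splits)

(* v # ws is a Hamiltonian path of E on insert v U; the start v is not listed. *)
definition ham_paths :: "('a \<Rightarrow> 'a \<Rightarrow> bool) \<Rightarrow> 'a \<Rightarrow> 'a set \<Rightarrow> 'a list set" where
  "ham_paths E v U = {ws. distinct ws \<and> set ws = U \<and> successively E (v # ws)}"

definition ham_count :: "('a \<Rightarrow> 'a \<Rightarrow> bool) \<Rightarrow> 'a \<Rightarrow> 'a set \<Rightarrow> nat" where
  "ham_count E v U = card (ham_paths E v U)"

lemma Cons_ham_paths:
  assumes "v \<in> V"
  shows "Cons v ` ham_paths E v (V - {v}) = {s. distinct s \<and> set s = V \<and> s ! 0 = v \<and> successively E s}"
proof (intro equalityI subsetI)
  fix s assume "s \<in> Cons v ` ham_paths E v (V - {v})"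
  then obtain ws where s: "s = v # ws" "distinct ws" "set ws = V - {v}" "successively E (v # ws)"
    by (auto simp: ham_paths_def)
  then have "set s = V"
    using assms by auto
  with s show "s \<in> {s. distinct s \<and> set s = V \<and> s ! 0 = v \<and> successively E s}"
    by simp
next
  fix s assume s: "s \<in> {s. distinct s \<and> set s = V \<and> s ! 0 = v \<and> successively E s}"
  then obtain ws where ws: "s = v # ws"
    using assms by (cases s) auto
  with s have "set ws = V - {v}"
    by auto
  with s ws have "ws \<in> ham_paths E v (V - {v})"
    by (simp add: ham_paths_def)
  with ws show "s \<in> Cons v ` ham_paths E v (V - {v})"
    by blast
qed

lemma finite_ham_paths:
  assumes "finite U"
  shows "finite (ham_paths E v U)"
proof (rule finite_subset)
  show "ham_paths E v U \<subseteq> {ws. set ws \<subseteq> U \<and> length ws = card U}"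
    by (auto simp: ham_paths_def distinct_card)
  show "finite {ws. set ws \<subseteq> U \<and> length ws = card U}"
    using finite_lists_length_eq[OF assms] by blast
qed

lemma ham_count_empty [simp]: "ham_count E v {} = 1"
proof -
  have "ham_paths E v {} = {[]}"
    by (auto simp: ham_paths_def)
  then show ?thesis
    by (simp add: ham_count_def)
qed

lemma ham_paths_nonempty:
  assumes "U \<noteq> {}"
  shows "ham_paths E v U = (\<Union>w\<in>{w\<in>U. E v w}. Cons w ` ham_paths E w (U - {w}))"
proof (intro equalityI subsetI)
  fix ws assume ws: "ws \<in> ham_paths E v U"
  then obtain w ws' where ws_eq: "ws = w # ws'"
    using assms by (cases ws) (auto simp: ham_paths_def)
  with ws have "w \<in> {w\<in>U. E v w}" "ws' \<in> ham_paths E w (U - {w})"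
    by (auto simp: ham_paths_def)
  with ws_eq show "ws \<in> (\<Union>w\<in>{w\<in>U. E v w}. Cons w ` ham_paths E w (U - {w}))"
    by blast
next
  fix ws assume "ws \<in> (\<Union>w\<in>{w\<in>U. E v w}. Cons w ` ham_paths E w (U - {w}))"
  then obtain w ws' where "w \<in> U" "E v w" "ws' \<in> ham_paths E w (U - {w})" "ws = w # ws'"
    by blast
  then show "ws \<in> ham_paths E v U"
    by (auto simp: ham_paths_def)
qed

lemma ham_count_nonempty:
  assumes "finite U" "U \<noteq> {}"
  shows "ham_count E v U = (\<Sum>w\<in>{w\<in>U. E v w}. ham_count E w (U - {w}))"
proof -
  have "ham_count E v U = card (\<Union>w\<in>{w\<in>U. E v w}. Cons w ` ham_paths E w (U - {w}))"
    unfolding ham_count_def ham_paths_nonempty[OF assms(2)] ..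
  also have "\<dots> = (\<Sum>w\<in>{w\<in>U. E v w}. card (Cons w ` ham_paths E w (U - {w})))"
    by (rule card_UN_disjoint) (use assms(1) in \<open>auto intro!: finite_ham_paths\<close>)
  also have "\<dots> = (\<Sum>w\<in>{w\<in>U. E v w}. ham_count E w (U - {w}))"
    unfolding ham_count_def by (intro sum.cong refl card_image) (auto intro: inj_onI)
  finally show ?thesis .
qed

lemma successively_within_one_side:
  assumes "successively E xs" "set xs \<subseteq> A \<union> B"
    and "\<And>a b. a \<in> A \<Longrightarrow> b \<in> B \<Longrightarrow> \<not> E a b \<and> \<not> E b a"
  shows "set xs \<subseteq> A \<or> set xs \<subseteq> B"
  using assms(1,2)
proof (induction xs)
  case (Cons x xs)
  then show ?case
    using assms(3) by (cases xs) (auto simp: successively_Cons)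
qed simp

lemma ham_count_eq_0_if_disconnected:
  assumes "U = A \<union> B" "A \<inter> B = {}" "A \<noteq> {}" "B \<noteq> {}"
    and "\<And>a b. a \<in> A \<Longrightarrow> b \<in> B \<Longrightarrow> \<not> E a b \<and> \<not> E b a"
  shows "ham_count E v U = 0"
proof -
  have "ham_paths E v U = {}"
  proof (rule ccontr)
    assume "ham_paths E v U \<noteq> {}"
    then obtain ws where "set ws = A \<union> B" "successively E (v # ws)"
      using assms(1) by (auto simp: ham_paths_def)
    then have "set ws \<subseteq> A \<or> set ws \<subseteq> B"
      by (intro successively_within_one_side[OF _ _ assms(5)]) (auto simp: successively_Cons)
    with \<open>set ws = A \<union> B\<close> show False
      using assms(2-4) by blast
  qed
  then show ?thesis
    by (simp add: ham_count_def)
qed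

lemma ham_count_eq_0_if_unreachable:
  assumes "x \<in> U" "\<And>z. z \<in> insert v U \<Longrightarrow> \<not> E z x"
  shows "ham_count E v U = 0"
proof -
  have "ham_paths E v U = {}"
  proof (rule ccontr)
    assume "ham_paths E v U \<noteq> {}"
    then obtain ws where ws: "set ws = U" "successively E (v # ws)"
      by (auto simp: ham_paths_def)
    then obtain i where i: "Suc i < length (v # ws)" "(v # ws) ! Suc i = x"
      using assms(1) by (auto simp: in_set_conv_nth)
    then have "(v # ws) ! i \<in> insert v U"
      using ws(1) by (cases i) auto
    with i ws(2) assms(2) show False
      by (auto simp: successively_conv_nth)
  qed
  then show ?thesis
    by (simp add: ham_count_def)
qed

lemma ham_count_eq_0_if_two_leaves:
  assumes "symp E" "v \<notin> U" "x \<in> U" "y \<in> U" "x \<noteq> y"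
    and "\<And>p. p \<in> insert v U \<Longrightarrow> E x p \<Longrightarrow> p = x'"
    and "\<And>p. p \<in> insert v U \<Longrightarrow> E y p \<Longrightarrow> p = y'"
  shows "ham_count E v U = 0"
proof -
  have "ham_paths E v U = {}"
  proof (rule ccontr)
    assume "ham_paths E v U \<noteq> {}"
    then obtain ws where ws: "distinct (v # ws)" "set ws = U" "successively E (v # ws)"
      using assms(2) by (auto simp: ham_paths_def)
    let ?s = "v # ws"
    obtain i j where ij: "Suc i < length ?s" "?s ! Suc i = x" "Suc j < length ?s" "?s ! Suc j = y"
      using assms(3,4) ws(2) by (auto simp: in_set_conv_nth)
    have "i \<noteq> j"
      using ij assms(5) by auto
    \<comment> \<open>the earlier of x and y is not the last vertex, so it has two neighbours on the path\<close>
    define k where "k = min i j"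
    have k: "Suc (Suc k) < length ?s" "?s ! Suc k = x \<or> ?s ! Suc k = y"
      using ij \<open>i \<noteq> j\<close> by (auto simp: k_def min_def)
    have "E (?s ! Suc k) (?s ! k)" "E (?s ! Suc k) (?s ! Suc (Suc k))"
      using ws(3) k(1) assms(1) by (auto simp: successively_conv_nth symp_def)
    moreover have "?s ! k \<in> insert v U" "?s ! Suc (Suc k) \<in> insert v U"
      using k(1) nth_mem[of k ?s] nth_mem[of "Suc (Suc k)" ?s] ws(2) by auto
    moreover have "?s ! k \<noteq> ?s ! Suc (Suc k)"
      using nth_eq_iff_index_eq[OF ws(1), of k "Suc (Suc k)"] k(1) by auto
    ultimately show False
      using k(2) assms(6,7) by metis
  qed
  then show ?thesis
    by (simp add: ham_count_def)
qed

lemma map_ham_paths_subset: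
  assumes "inj_on f (insert v U)"
    and "\<And>a b. a \<in> insert v U \<Longrightarrow> b \<in> insert v U \<Longrightarrow> E' (f a) (f b) \<longleftrightarrow> E a b"
  shows "map f ` ham_paths E v U \<subseteq> ham_paths E' (f v) (f ` U)"
proof
  fix xs assume "xs \<in> map f ` ham_paths E v U"
  then obtain ws where ws: "xs = map f ws" "distinct ws" "set ws = U" "successively E (v # ws)"
    by (auto simp: ham_paths_def)
  have "inj_on f (set ws)"
    using inj_on_subset[OF assms(1)] ws(3) by blast
  moreover have "successively E' (f v # map f ws)"
    using ws(3,4) by (simp only: list.map(2)[symmetric] successively_map)
      (rule successively_cong[THEN iffD2]; use assms(2) in auto)
  ultimately show "xs \<in> ham_paths E' (f v) (f ` U)"
    using ws by (simp add: ham_paths_def distinct_map)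
qed

lemma ham_count_iso:
  assumes "inj_on f (insert v U)"
    and "\<And>a b. a \<in> insert v U \<Longrightarrow> b \<in> insert v U \<Longrightarrow> E' (f a) (f b) \<longleftrightarrow> E a b"
  shows "ham_count E v U = ham_count E' (f v) (f ` U)"
proof -
  define g where "g = the_inv_into (insert v U) f"
  have gf: "g (f a) = a" if "a \<in> insert v U" for a
    using assms(1) that by (simp add: g_def the_inv_into_f_f)
  have fg: "f (g b) = b" if "b \<in> f ` insert v U" for b
    using assms(1) that by (simp add: g_def f_the_inv_into_f)
  have "map g ` ham_paths E' (f v) (f ` U) \<subseteq> ham_paths E (g (f v)) (g ` f ` U)"
  proof (rule map_ham_paths_subset)
    show "inj_on g (insert (f v) (f ` U))"
      using inj_on_the_inv_into[OF assms(1)] by (simp add: g_def)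
    show "E (g a) (g b) \<longleftrightarrow> E' a b"
      if ab: "a \<in> insert (f v) (f ` U)" "b \<in> insert (f v) (f ` U)" for a b
    proof -
      obtain a' b' where "a = f a'" "b = f b'" "a' \<in> insert v U" "b' \<in> insert v U"
        using ab by blast
      then show ?thesis
        using assms(2) gf by simp
    qed
  qed
  moreover have "ham_paths E (g (f v)) (g ` f ` U) = ham_paths E v U"
    using gf by (simp add: image_image)
  ultimately have "map g xs \<in> ham_paths E v U" if "xs \<in> ham_paths E' (f v) (f ` U)" for xs
    using that by blast
  moreover have "map f (map g xs) = xs" if "xs \<in> ham_paths E' (f v) (f ` U)" for xs
    using that fg by (auto simp: ham_paths_def intro!: map_idI)
  ultimately have "ham_paths E' (f v) (f ` U) \<subseteq> map f ` ham_paths E v U"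
    by (metis image_eqI subsetI)
  then have "map f ` ham_paths E v U = ham_paths E' (f v) (f ` U)"
    using map_ham_paths_subset[of f v U E' E, OF assms] by blast
  moreover have "inj_on (map f) (ham_paths E v U)"
  proof (rule inj_onI)
    fix xs ys assume "xs \<in> ham_paths E v U" "ys \<in> ham_paths E v U" "map f xs = map f ys"
    moreover from this have "inj_on f (set xs \<union> set ys)"
      using inj_on_subset[OF assms(1)] by (auto simp: ham_paths_def)
    ultimately show "xs = ys"
      by (simp add: inj_on_map_eq_map)
  qed
  ultimately show ?thesis
    unfolding ham_count_def by (metis card_image)
qed

section \<open>Prisms and Moebius ladders\<close>

(* Vertex (c, r) lies in column c and row r. Besides rungs and rails there are two closing
   edges between the columns h - 1 and 0, which swap the rows iff t: t = False gives the prism,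
   t = True the Moebius ladder. *)
fun ladder :: "nat \<Rightarrow> bool \<Rightarrow> nat \<times> bool \<Rightarrow> nat \<times> bool \<Rightarrow> bool" where
  "ladder h t (c, r) (c', r') \<longleftrightarrow> c < h \<and> c' < h \<and>
     ((c' = c \<and> r' = (\<not> r)) \<or> (r' = r \<and> (c' = Suc c \<or> c = Suc c')) \<or>
      (c = h - 1 \<and> c' = 0 \<and> r' = (r \<noteq> t)) \<or> (c = 0 \<and> c' = h - 1 \<and> r' = (r \<noteq> t)))"

definition ladder_vertices :: "nat \<Rightarrow> (nat \<times> bool) set" where
  "ladder_vertices h = {0..<h} \<times> UNIV"

definition ladder_nbrs :: "nat \<Rightarrow> bool \<Rightarrow> nat \<times> bool \<Rightarrow> (nat \<times> bool) set" where
  "ladder_nbrs h t v = (case v of (c, r) \<Rightarrow>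
     {(c, \<not> r), if Suc c < h then (Suc c, r) else (0, r \<noteq> t),
      if 0 < c then (c - 1, r) else (h - 1, r \<noteq> t)})"

definition ladder_mirror :: "nat \<Rightarrow> bool \<Rightarrow> nat \<times> bool \<Rightarrow> nat \<times> bool" where
  "ladder_mirror h t v = (case v of (c, r) \<Rightarrow> if c = 0 then (0, r) else (h - c, r \<noteq> t))"

lemma sum_max_pred_1:
  assumes "2 \<le> h"
  shows "2 * (\<Sum>k\<in>{1..<h}. max (k - 1) 1) = (h - 1) * (h - 2) + (2::nat)"
  using assms
proof (induction h rule: nat_induct_at_least)
  case (Suc h)
  then show ?case
    by (cases h) (auto simp: algebra_simps)
qed simp

lemma sum_parity_indicator:
  "(\<Sum>k\<in>{1..<h}. of_bool (even k = t)) = (if t then (h - 1) div 2 else h div (2::nat))"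
proof (induction h)
  case (Suc h)
  then show ?case
    by (cases h) (auto elim!: evenE oddE)
qed simp

locale ladder_count =
  fixes h :: nat and t :: bool
  assumes three_le_h: "3 \<le> h"
begin

abbreviation N :: "nat \<times> bool \<Rightarrow> (nat \<times> bool) set \<Rightarrow> nat" where
  "N \<equiv> ham_count (ladder h t)"

lemma symp_ladder: "symp (ladder h t)"
proof (rule sympI)
  fix v w show "ladder h t v w \<Longrightarrow> ladder h t w v"
    by (cases v; cases w) auto
qed

lemma ladder_iff_nbrs:
  "c < h \<Longrightarrow> c' < h \<Longrightarrow> ladder h t (c, r) (c', r') \<longleftrightarrow> (c', r') \<in> ladder_nbrs h t (c, r)"
  using three_le_h unfolding ladder_nbrs_def by (cases "c = 0"; cases "Suc c < h") auto

lemma N_step: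
  assumes "c < h" "U \<subseteq> ladder_vertices h" "U \<noteq> {}"
  shows "N (c, r) U = (\<Sum>w\<in>ladder_nbrs h t (c, r) \<inter> U. N w (U - {w}))"
proof -
  have "ladder h t (c, r) w \<longleftrightarrow> w \<in> ladder_nbrs h t (c, r)" if "w \<in> U" for w
  proof -
    obtain c' r' where "w = (c', r')"
      by fastforce
    moreover from this have "c' < h"
      using that assms(2) by (auto simp: ladder_vertices_def)
    ultimately show ?thesis
      using ladder_iff_nbrs[OF assms(1)] by simp
  qed
  then have "{w\<in>U. ladder h t (c, r) w} = ladder_nbrs h t (c, r) \<inter> U"
    by blast
  moreover have "finite U"
    using assms(2) by (rule finite_subset) (simp add: ladder_vertices_def)
  ultimately show ?thesis
    using ham_count_nonempty[OF _ assms(3)] by simp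
qed

lemma N_step_one:
  assumes "ladder_nbrs h t (c, r) \<inter> U = {w}" "c < h" "U \<subseteq> ladder_vertices h"
  shows "N (c, r) U = N w (U - {w})"
proof -
  have "U \<noteq> {}"
    using assms(1) by blast
  then show ?thesis
    using N_step[OF assms(2,3)] assms(1) by simp
qed

lemma N_step_two:
  assumes "ladder_nbrs h t (c, r) \<inter> U = {w, w'}" "w \<noteq> w'" "c < h" "U \<subseteq> ladder_vertices h"
  shows "N (c, r) U = N w (U - {w}) + N w' (U - {w'})"
proof -
  have "U \<noteq> {}"
    using assms(1) by blast
  then show ?thesis
    using N_step[OF assms(3,4)] assms(1,2) by simp
qed

lemma N_step_none:
  assumes "ladder_nbrs h t (c, r) \<inter> U = {}" "U \<noteq> {}" "c < h" "U \<subseteq> ladder_vertices h"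
  shows "N (c, r) U = 0"
  using N_step[OF assms(3,4,2)] assms(1) by simp

lemma N_eq_0_if_unreachable:
  assumes "ladder_nbrs h t (c, r) \<inter> insert v U = {}" "(c, r) \<in> U" "c < h"
    "insert v U \<subseteq> ladder_vertices h"
  shows "N v U = 0"
proof (rule ham_count_eq_0_if_unreachable[OF assms(2)])
  fix z assume z: "z \<in> insert v U"
  obtain c' r' where z_eq: "z = (c', r')"
    by fastforce
  with z assms(4) have "c' < h"
    by (auto simp: ladder_vertices_def)
  with z z_eq assms(1,3) have "\<not> ladder h t (c, r) z"
    using ladder_iff_nbrs by blast
  then show "\<not> ladder h t z (c, r)"
    using symp_ladder by (auto dest: sympD)
qed

lemma ladder_eq_if_unique_nbr:
  assumes "ladder_nbrs h t (c, r) \<inter> S \<subseteq> {w}" "ladder h t (c, r) p" "p \<in> S"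
    "S \<subseteq> ladder_vertices h"
  shows "p = w"
proof -
  obtain c' r' where p: "p = (c', r')"
    by fastforce
  with assms(3,4) have "c < h" "c' < h"
    using assms(2) by (auto simp: ladder_vertices_def)
  then have "p \<in> ladder_nbrs h t (c, r)"
    using assms(2) p ladder_iff_nbrs by blast
  then show ?thesis
    using assms(1,3) by blast
qed

lemma N_rail_down:
  assumes "1 \<le> c" "c \<le> j" "j < h"
  shows "N (j, r) ({c..<j} \<times> {r}) = 1"
  using assms
proof (induction j)
  case (Suc i)
  show ?case
  proof (cases "c = Suc i")
    case False
    then have "c \<le> i"
      using Suc.prems by simp
    have "ladder_nbrs h t (Suc i, r) \<inter> {c..<Suc i} \<times> {r} = {(i, r)}"
      using Suc.prems \<open>c \<le> i\<close> by (auto simp: ladder_nbrs_def)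
    then have "N (Suc i, r) ({c..<Suc i} \<times> {r}) = N (i, r) ({c..<Suc i} \<times> {r} - {(i, r)})"
      by (rule N_step_one) (use Suc.prems in \<open>auto simp: ladder_vertices_def\<close>)
    also have "{c..<Suc i} \<times> {r} - {(i, r)} = {c..<i} \<times> {r}"
      by auto
    also have "N (i, r) ({c..<i} \<times> {r}) = 1"
      using Suc \<open>c \<le> i\<close> by simp
    finally show ?thesis .
  qed simp
qed simp

lemma N_rail_up:
  assumes "j < d" "d \<le> h" "\<not> (j = 0 \<and> d = h \<and> \<not> t)"
  shows "N (j, r) ({Suc j..<d} \<times> {r}) = 1"
  using assms
proof (induction "d - j" arbitrary: j)
  case (Suc k)
  show ?case
  proof (cases "Suc j = d")
    case False
    have "ladder_nbrs h t (j, r) \<inter> {Suc j..<d} \<times> {r} = {(Suc j, r)}"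
      using Suc.prems False three_le_h by (auto simp: ladder_nbrs_def)
    then have "N (j, r) ({Suc j..<d} \<times> {r}) = N (Suc j, r) ({Suc j..<d} \<times> {r} - {(Suc j, r)})"
      by (rule N_step_one) (use Suc.prems in \<open>auto simp: ladder_vertices_def\<close>)
    also have "{Suc j..<d} \<times> {r} - {(Suc j, r)} = {Suc (Suc j)..<d} \<times> {r}"
      by auto
    also have "N (Suc j, r) ({Suc (Suc j)..<d} \<times> {r}) = 1"
      using Suc False by simp
    finally show ?thesis .
  qed simp
qed simp

lemma N_back_to_start:
  assumes "1 \<le> a" "a < h" "j < a"
  shows "N (j, True) ({0..<j} \<times> {True} \<union> {Suc a..<h} \<times> UNIV) = N (0, True) ({Suc a..<h} \<times> UNIV)"
  using assms(3)
proof (induction j)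
  case (Suc i)
  let ?U = "{0..<Suc i} \<times> {True} \<union> {Suc a..<h} \<times> UNIV"
  have "ladder_nbrs h t (Suc i, True) \<inter> ?U = {(i, True)}"
    using Suc.prems assms by (auto simp: ladder_nbrs_def)
  then have "N (Suc i, True) ?U = N (i, True) (?U - {(i, True)})"
    by (rule N_step_one) (use Suc.prems assms in \<open>auto simp: ladder_vertices_def\<close>)
  also have "?U - {(i, True)} = {0..<i} \<times> {True} \<union> {Suc a..<h} \<times> UNIV"
    using Suc.prems by auto
  finally show ?case
    using Suc by simp
qed simp

lemma N_hairpin:
  assumes "1 \<le> c" "c < j" "j < d" "d \<le> h"
  shows "N (j, r) ({Suc j..<d} \<times> {r} \<union> {c..<d} \<times> {\<not> r}) = 1"
  using assms
proof (induction "d - j" arbitrary: j)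
  case (Suc k)
  let ?U = "{Suc j..<d} \<times> {r} \<union> {c..<d} \<times> {\<not> r}"
  show ?case
  proof (cases "Suc j = d")
    case True
    have "ladder_nbrs h t (j, r) \<inter> ?U = {(j, \<not> r)}"
      using Suc.prems True three_le_h by (auto simp: ladder_nbrs_def)
    then have "N (j, r) ?U = N (j, \<not> r) (?U - {(j, \<not> r)})"
      by (rule N_step_one) (use Suc.prems in \<open>auto simp: ladder_vertices_def\<close>)
    also have "?U - {(j, \<not> r)} = {c..<j} \<times> {\<not> r}"
      using True by auto
    also have "N (j, \<not> r) ({c..<j} \<times> {\<not> r}) = 1"
      using Suc.prems True by (intro N_rail_down) auto
    finally show ?thesis .
  next
    case False
    have "ladder_nbrs h t (j, r) \<inter> ?U = {(j, \<not> r), (Suc j, r)}"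
      using Suc.prems False three_le_h by (auto simp: ladder_nbrs_def)
    then have "N (j, r) ?U = N (j, \<not> r) (?U - {(j, \<not> r)}) + N (Suc j, r) (?U - {(Suc j, r)})"
      by (rule N_step_two) (use Suc.prems in \<open>auto simp: ladder_vertices_def\<close>)
    moreover have "N (j, \<not> r) (?U - {(j, \<not> r)}) = 0"
    proof (rule ham_count_eq_0_if_disconnected)
      show "?U - {(j, \<not> r)} = {c..<j} \<times> {\<not> r} \<union> {Suc j..<d} \<times> UNIV"
        using Suc.prems by auto
      show "{c..<j} \<times> {\<not> r} \<inter> {Suc j..<d} \<times> UNIV = {}" "{c..<j} \<times> {\<not> r} \<noteq> {}"
        "{Suc j..<d} \<times> UNIV \<noteq> {}"
        using Suc.prems False by auto
      show "\<not> ladder h t x y \<and> \<not> ladder h t y x"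
        if "x \<in> {c..<j} \<times> {\<not> r}" "y \<in> {Suc j..<d} \<times> UNIV" for x y
        using that Suc.prems by auto
    qed
    moreover have "?U - {(Suc j, r)} = {Suc (Suc j)..<d} \<times> {r} \<union> {c..<d} \<times> {\<not> r}"
      by auto
    moreover have "N (Suc j, r) ({Suc (Suc j)..<d} \<times> {r} \<union> {c..<d} \<times> {\<not> r}) = 1"
      using Suc False by simp
    ultimately show ?thesis
      by simp
  qed
qed simp

lemma N_block:
  assumes "1 \<le> c" "c < d" "d \<le> h"
  shows "N (c, r) ({c..<d} \<times> UNIV - {(c, r)}) = d - c"
  using assms
proof (induction "d - c" arbitrary: c r)
  case (Suc k)
  let ?U = "{c..<d} \<times> UNIV - {(c, r)}"
  show ?case
  proof (cases "Suc c = d")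
    case True
    have "ladder_nbrs h t (c, r) \<inter> ?U = {(c, \<not> r)}"
      using Suc.prems True three_le_h by (auto simp: ladder_nbrs_def)
    then have "N (c, r) ?U = N (c, \<not> r) (?U - {(c, \<not> r)})"
      by (rule N_step_one) (use Suc.prems in \<open>auto simp: ladder_vertices_def\<close>)
    also have "?U - {(c, \<not> r)} = {}"
      using True by auto
    finally show ?thesis
      using True by simp
  next
    case False
    have "ladder_nbrs h t (c, r) \<inter> ?U = {(c, \<not> r), (Suc c, r)}"
      using Suc.prems False three_le_h by (auto simp: ladder_nbrs_def)
    then have "N (c, r) ?U = N (c, \<not> r) (?U - {(c, \<not> r)}) + N (Suc c, r) (?U - {(Suc c, r)})"
      by (rule N_step_two) (use Suc.prems in \<open>auto simp: ladder_vertices_def\<close>)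
    moreover have "N (c, \<not> r) (?U - {(c, \<not> r)}) = d - Suc c"
    proof -
      have "ladder_nbrs h t (c, \<not> r) \<inter> {Suc c..<d} \<times> UNIV = {(Suc c, \<not> r)}"
        using Suc.prems False three_le_h by (auto simp: ladder_nbrs_def)
      then have "N (c, \<not> r) ({Suc c..<d} \<times> UNIV)
          = N (Suc c, \<not> r) ({Suc c..<d} \<times> UNIV - {(Suc c, \<not> r)})"
        by (rule N_step_one) (use Suc.prems in \<open>auto simp: ladder_vertices_def\<close>)
      also have "\<dots> = d - Suc c"
        using Suc False by simp
      also have "{Suc c..<d} \<times> UNIV = ?U - {(c, \<not> r)}"
        by auto
      finally show ?thesis .
    qed
    moreover have "?U - {(Suc c, r)} = {Suc (Suc c)..<d} \<times> {r} \<union> {c..<d} \<times> {\<not> r}"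
      by auto
    moreover have "N (Suc c, r) ({Suc (Suc c)..<d} \<times> {r} \<union> {c..<d} \<times> {\<not> r}) = 1"
      using Suc.prems False by (intro N_hairpin) auto
    ultimately show ?thesis
      using Suc.prems False by simp
  qed
qed simp

lemma ladder_mirror_iff:
  "v \<in> ladder_vertices h \<Longrightarrow> w \<in> ladder_vertices h \<Longrightarrow>
    ladder h t (ladder_mirror h t v) (ladder_mirror h t w) \<longleftrightarrow> ladder h t v w"
  using three_le_h by (cases v; cases w) (auto simp: ladder_mirror_def ladder_vertices_def)

lemma inj_on_ladder_mirror: "inj_on (ladder_mirror h t) (ladder_vertices h)"
proof (rule inj_onI)
  fix v w assume "v \<in> ladder_vertices h" "w \<in> ladder_vertices h"
    "ladder_mirror h t v = ladder_mirror h t w"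
  then show "v = w"
    by (cases v; cases w) (auto simp: ladder_mirror_def ladder_vertices_def split: if_splits)
qed

lemma N_mirror:
  assumes "v \<in> ladder_vertices h" "U \<subseteq> ladder_vertices h"
  shows "N v U = N (ladder_mirror h t v) (ladder_mirror h t ` U)"
proof (rule ham_count_iso)
  have "insert v U \<subseteq> ladder_vertices h"
    using assms by blast
  then show "inj_on (ladder_mirror h t) (insert v U)"
    using inj_on_ladder_mirror by (rule inj_on_subset[rotated])
  show "ladder h t (ladder_mirror h t a) (ladder_mirror h t b) \<longleftrightarrow> ladder h t a b"
    if "a \<in> insert v U" "b \<in> insert v U" for a b
    using that assms ladder_mirror_iff by blast
qed

lemma ladder_mirror_image_diff:
  "A \<subseteq> ladder_vertices h \<Longrightarrow> B \<subseteq> ladder_vertices h \<Longrightarrow>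
    ladder_mirror h t ` (A - B) = ladder_mirror h t ` A - ladder_mirror h t ` B"
  by (rule inj_on_image_set_diff[OF inj_on_ladder_mirror]) auto

lemma ladder_mirror_block:
  assumes "a < h"
  shows "ladder_mirror h t ` ({Suc a..<h} \<times> UNIV) = {1..<h - a} \<times> UNIV"
proof (intro equalityI subsetI)
  fix w assume w: "w \<in> {1..<h - a} \<times> (UNIV :: bool set)"
  then obtain c r where "w = (c, r)"
    by blast
  moreover have "ladder_mirror h t (h - c, r \<noteq> t) = (c, r)" "(h - c, r \<noteq> t) \<in> {Suc a..<h} \<times> UNIV"
    using w calculation by (auto simp: ladder_mirror_def)
  ultimately show "w \<in> ladder_mirror h t ` ({Suc a..<h} \<times> UNIV)"
    by (metis image_eqI)
qed (use assms in \<open>auto simp: ladder_mirror_def\<close>)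

lemma ladder_mirror_vertices: "ladder_mirror h t ` ladder_vertices h = ladder_vertices h"
proof (intro equalityI subsetI)
  fix w assume w: "w \<in> ladder_vertices h"
  obtain c r where cr: "w = (c, r)"
    by fastforce
  show "w \<in> ladder_mirror h t ` ladder_vertices h"
  proof (cases "c = 0")
    case True
    then have "ladder_mirror h t (0, r) = w" "(0, r) \<in> ladder_vertices h"
      using cr three_le_h by (auto simp: ladder_mirror_def ladder_vertices_def)
    then show ?thesis
      by (metis image_eqI)
  next
    case False
    then have "ladder_mirror h t (h - c, r \<noteq> t) = w" "(h - c, r \<noteq> t) \<in> ladder_vertices h"
      using w cr by (auto simp: ladder_mirror_def ladder_vertices_def)
    then show ?thesis
      by (metis image_eqI)
  qed
qed (use three_le_h in \<open>auto simp: ladder_mirror_def ladder_vertices_def split: if_splits\<close>)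

lemma N_tail_last:
  assumes "1 \<le> a" "a < h - 1"
  shows "N (h - 1, \<rho>) (insert (h - 1, \<not> \<rho>) ({0..<a} \<times> {True})) = of_bool (\<rho> = t)"
proof -
  let ?T = "{0..<a} \<times> {True}"
  let ?U = "insert (h - 1, \<not> \<rho>) ?T"
  show ?thesis
  proof (cases "\<rho> = t")
    case True
    have "ladder_nbrs h t (h - 1, \<rho>) \<inter> ?U = {(h - 1, \<not> \<rho>)}"
      using assms True three_le_h by (auto simp: ladder_nbrs_def)
    then have "N (h - 1, \<rho>) ?U = N (h - 1, \<not> \<rho>) (?U - {(h - 1, \<not> \<rho>)})"
      by (rule N_step_one) (use assms in \<open>auto simp: ladder_vertices_def\<close>)
    also have "?U - {(h - 1, \<not> \<rho>)} = ?T"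
      using assms by auto
    also have "ladder_nbrs h t (h - 1, \<not> \<rho>) \<inter> ?T = {(0, True)}"
      using assms True three_le_h by (auto simp: ladder_nbrs_def)
    then have "N (h - 1, \<not> \<rho>) ?T = N (0, True) (?T - {(0, True)})"
      by (rule N_step_one) (use assms in \<open>auto simp: ladder_vertices_def\<close>)
    also have "?T - {(0, True)} = {Suc 0..<a} \<times> {True}"
      by auto
    also have "N (0, True) ({Suc 0..<a} \<times> {True}) = 1"
      using assms by (intro N_rail_up) auto
    finally show ?thesis
      using True by simp
  next
    case False
    have "ladder_nbrs h t (h - 1, \<rho>) \<inter> ?U = {(h - 1, \<not> \<rho>), (0, True)}"
      using assms False three_le_h by (auto simp: ladder_nbrs_def)
    then have "N (h - 1, \<rho>) ?U
        = N (h - 1, \<not> \<rho>) (?U - {(h - 1, \<not> \<rho>)}) + N (0, True) (?U - {(0, True)})"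
      by (rule N_step_two) (use assms in \<open>auto simp: ladder_vertices_def\<close>)
    moreover have "N (h - 1, \<not> \<rho>) (?U - {(h - 1, \<not> \<rho>)}) = 0"
      by (rule N_step_none) (use assms False three_le_h in \<open>auto simp: ladder_vertices_def ladder_nbrs_def\<close>)
    moreover have "N (0, True) (?U - {(0, True)}) = 0"
      by (rule N_eq_0_if_unreachable[where c = "h - 1" and r = "\<not> \<rho>"])
        (use assms False three_le_h in \<open>auto simp: ladder_vertices_def ladder_nbrs_def\<close>)
    ultimately show ?thesis
      using False by simp
  qed
qed

(* Both (j, \<not> \<rho>) and (a - 1, True) have a single neighbour left, so both would have to
   end the path. *)
lemma N_tail_dead_end:
  assumes "1 \<le> a" "a < j" "Suc j < h"
  shows "N (Suc j, \<rho>)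
    (insert (j, \<not> \<rho>) ({Suc j..<h} \<times> UNIV - {(Suc j, \<rho>)}) \<union> {0..<a} \<times> {True}) = 0"
    (is "N ?v ?U = 0")
proof -
  have S: "insert ?v ?U \<subseteq> ladder_vertices h"
    using assms by (auto simp: ladder_vertices_def)
  have a_nbr: "ladder_nbrs h t (a - 1, True) \<inter> insert ?v ?U
      \<subseteq> {if a = 1 then (h - 1, \<not> t) else (a - 2, True)}"
    using assms three_le_h by (auto simp: ladder_nbrs_def)
  show ?thesis
  proof (rule ham_count_eq_0_if_two_leaves[OF symp_ladder])
    show "?v \<notin> ?U" "(j, \<not> \<rho>) \<in> ?U" "(a - 1, True) \<in> ?U" "(j, \<not> \<rho>) \<noteq> (a - 1, True)"
      using assms by auto
    show "p = (Suc j, \<not> \<rho>)" if "p \<in> insert ?v ?U" "ladder h t (j, \<not> \<rho>) p" for p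
      by (rule ladder_eq_if_unique_nbr[OF _ that(2,1) S])
        (use assms three_le_h in \<open>auto simp: ladder_nbrs_def\<close>)
    show "p = (if a = 1 then (h - 1, \<not> t) else (a - 2, True))"
      if "p \<in> insert ?v ?U" "ladder h t (a - 1, True) p" for p
      by (rule ladder_eq_if_unique_nbr[OF a_nbr that(2,1) S])
  qed
qed

(* The path covers the remaining columns rung by rung and then has to cross a closing edge into
   (0, True); whether it arrives in the right row depends on the parity of the column count. *)
lemma N_tail:
  assumes "1 \<le> a" "a < j" "j < h"
  shows "N (j, \<rho>) (({j..<h} \<times> UNIV - {(j, \<rho>)}) \<union> {0..<a} \<times> {True})
    = of_bool ((\<rho> \<noteq> odd (h - 1 - j)) = t)"
  using assms
proof (induction "h - j" arbitrary: j \<rho>)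
  case (Suc k)
  let ?T = "{0..<a} \<times> {True}"
  let ?U = "({j..<h} \<times> UNIV - {(j, \<rho>)}) \<union> ?T"
  show ?case
  proof (cases "Suc j = h")
    case True
    then have "?U = insert (h - 1, \<not> \<rho>) ?T" "j = h - 1"
      by auto
    then show ?thesis
      using N_tail_last Suc.prems by simp
  next
    case False
    have "ladder_nbrs h t (j, \<rho>) \<inter> ?U = {(j, \<not> \<rho>), (Suc j, \<rho>)}"
      using Suc.prems False three_le_h by (auto simp: ladder_nbrs_def)
    then have "N (j, \<rho>) ?U
        = N (j, \<not> \<rho>) (?U - {(j, \<not> \<rho>)}) + N (Suc j, \<rho>) (?U - {(Suc j, \<rho>)})"
      by (rule N_step_two) (use Suc.prems in \<open>auto simp: ladder_vertices_def\<close>)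
    moreover have "N (j, \<not> \<rho>) (?U - {(j, \<not> \<rho>)}) = of_bool ((\<rho> \<noteq> odd (h - 1 - j)) = t)"
    proof -
      let ?B = "{Suc j..<h} \<times> UNIV \<union> ?T"
      have "ladder_nbrs h t (j, \<not> \<rho>) \<inter> ?B = {(Suc j, \<not> \<rho>)}"
        using Suc.prems False three_le_h by (auto simp: ladder_nbrs_def)
      then have "N (j, \<not> \<rho>) ?B = N (Suc j, \<not> \<rho>) (?B - {(Suc j, \<not> \<rho>)})"
        by (rule N_step_one) (use Suc.prems in \<open>auto simp: ladder_vertices_def\<close>)
      also have "?B - {(Suc j, \<not> \<rho>)} = ({Suc j..<h} \<times> UNIV - {(Suc j, \<not> \<rho>)}) \<union> ?T"
        using Suc.prems by auto
      also have "N (Suc j, \<not> \<rho>) \<dots> = of_bool (((\<not> \<rho>) \<noteq> odd (h - 1 - Suc j)) = t)"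
        using Suc.hyps(1)[of "Suc j"] Suc.hyps(2) Suc.prems False by simp
      also have "odd (h - 1 - Suc j) \<longleftrightarrow> even (h - 1 - j)"
        using Suc.prems(3) False by (simp add: Suc_diff_Suc)
      also have "?B = ?U - {(j, \<not> \<rho>)}"
        using Suc.prems by auto
      finally show ?thesis
        using Suc.prems(3) by auto
    qed
    moreover have "?U - {(Suc j, \<rho>)}
        = insert (j, \<not> \<rho>) ({Suc j..<h} \<times> UNIV - {(Suc j, \<rho>)}) \<union> ?T"
      using Suc.prems by auto
    ultimately show ?thesis
      using N_tail_dead_end Suc.prems False by simp
  qed
qed simp

lemma N_wrap_block:
  assumes "1 \<le> a" "Suc a < h"
  shows "N (0, True) ({Suc a..<h} \<times> UNIV) = h - 1 - a"
proof -
  let ?B = "{Suc a..<h} \<times> (UNIV :: bool set)"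
  let ?m = "ladder_mirror h t"
  have "ladder_nbrs h t (0, True) \<inter> ?B = {(h - 1, \<not> t)}"
    using assms three_le_h by (auto simp: ladder_nbrs_def)
  then have "N (0, True) ?B = N (h - 1, \<not> t) (?B - {(h - 1, \<not> t)})"
    by (rule N_step_one) (use assms in \<open>auto simp: ladder_vertices_def\<close>)
  also have "\<dots> = N (?m (h - 1, \<not> t)) (?m ` (?B - {(h - 1, \<not> t)}))"
    by (rule N_mirror) (use three_le_h in \<open>auto simp: ladder_vertices_def\<close>)
  also have "?m (h - 1, \<not> t) = (1, True)"
    using three_le_h by (auto simp: ladder_mirror_def)
  also have "?m ` (?B - {(h - 1, \<not> t)}) = ?m ` ?B - ?m ` {(h - 1, \<not> t)}"
    by (rule ladder_mirror_image_diff) (use three_le_h in \<open>auto simp: ladder_vertices_def\<close>)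
  also have "?m ` {(h - 1, \<not> t)} = {(1, True)}"
    using three_le_h by (auto simp: ladder_mirror_def)
  also have "?m ` ?B = {1..<h - a} \<times> UNIV"
    using assms by (intro ladder_mirror_block) simp
  also have "N (1, True) ({1..<h - a} \<times> UNIV - {(1, True)}) = h - a - 1"
    using N_block[of 1 "h - a" True] assms by simp
  finally show ?thesis
    by simp
qed

lemma N_rung_last:
  assumes "h = Suc a"
  shows "N (a, True) ({0..<a} \<times> {True}) = 1 + of_bool (\<not> t)"
proof -
  let ?U = "{0..<a} \<times> {True}"
  have "1 \<le> a" "a < h"
    using assms three_le_h by auto
  have via_start: "N (a - 1, True) (?U - {(a - 1, True)}) = 1"
  proof -
    have "?U - {(a - 1, True)} = {0..<a - 1} \<times> {True} \<union> {Suc a..<h} \<times> UNIV"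
      using assms by auto
    then show ?thesis
      using N_back_to_start[OF \<open>1 \<le> a\<close> \<open>a < h\<close>, of "a - 1"] \<open>1 \<le> a\<close> assms by simp
  qed
  show ?thesis
  proof (cases t)
    case True
    have "ladder_nbrs h t (a, True) \<inter> ?U = {(a - 1, True)}"
      using assms True three_le_h by (auto simp: ladder_nbrs_def)
    then have "N (a, True) ?U = N (a - 1, True) (?U - {(a - 1, True)})"
      by (rule N_step_one) (use assms in \<open>auto simp: ladder_vertices_def\<close>)
    then show ?thesis
      using via_start True by simp
  next
    case False
    have "ladder_nbrs h t (a, True) \<inter> ?U = {(a - 1, True), (0, True)}"
      using assms False three_le_h by (auto simp: ladder_nbrs_def)
    then have "N (a, True) ?U = N (a - 1, True) (?U - {(a - 1, True)}) + N (0, True) (?U - {(0, True)})"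
      by (rule N_step_two) (use assms three_le_h in \<open>auto simp: ladder_vertices_def\<close>)
    moreover have "?U - {(0, True)} = {Suc 0..<a} \<times> {True}"
      by auto
    moreover have "N (0, True) ({Suc 0..<a} \<times> {True}) = 1"
      using assms \<open>1 \<le> a\<close> by (intro N_rail_up) auto
    ultimately show ?thesis
      using via_start False by simp
  qed
qed

lemma N_rung:
  assumes "1 \<le> a" "a < h"
  shows "N (a, True) ({0..<a} \<times> {True} \<union> {Suc a..<h} \<times> UNIV)
    = max (h - 1 - a) 1 + of_bool (even (h - a) = t)"
proof -
  let ?B = "{Suc a..<h} \<times> (UNIV :: bool set)"
  let ?U = "{0..<a} \<times> {True} \<union> ?B"
  have via_start: "N (a - 1, True) (?U - {(a - 1, True)}) = N (0, True) ?B"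
  proof -
    have "?U - {(a - 1, True)} = {0..<a - 1} \<times> {True} \<union> ?B"
      using assms by auto
    then show ?thesis
      using N_back_to_start[OF assms, of "a - 1"] assms by simp
  qed
  show ?thesis
  proof (cases "Suc a < h")
    case True
    have "ladder_nbrs h t (a, True) \<inter> ?U = {(a - 1, True), (Suc a, True)}"
      using assms True three_le_h by (auto simp: ladder_nbrs_def)
    then have "N (a, True) ?U = N (a - 1, True) (?U - {(a - 1, True)}) + N (Suc a, True) (?U - {(Suc a, True)})"
      by (rule N_step_two) (use assms in \<open>auto simp: ladder_vertices_def\<close>)
    moreover have "N (Suc a, True) (?U - {(Suc a, True)}) = of_bool (even (h - a) = t)"
    proof -
      have parity: "even (h - 1 - Suc a) \<longleftrightarrow> even (h - a)"
        using True by simp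
      have "?U - {(Suc a, True)} = ({Suc a..<h} \<times> UNIV - {(Suc a, True)}) \<union> {0..<a} \<times> {True}"
        by auto
      then show ?thesis
        using N_tail[of a "Suc a" True] assms True parity by simp
    qed
    ultimately show ?thesis
      using via_start N_wrap_block[OF assms(1) True] True by simp
  next
    case False
    then have "h = Suc a"
      using assms by simp
    then show ?thesis
      using N_rung_last by simp
  qed
qed

lemma N_lower_rail:
  assumes "1 \<le> a" "a < h"
  shows "N (a, False) ({Suc a..<h} \<times> {False} \<union> {0..<h} \<times> {True})
    = (\<Sum>b\<in>{a..<h}. max (h - 1 - b) 1 + of_bool (even (h - b) = t)) + of_bool t"
  using assms
proof (induction "h - a" arbitrary: a)
  case (Suc k)
  let ?U = "{Suc a..<h} \<times> {False} \<union> {0..<h} \<times> {True}"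
  have rung: "N (a, True) (?U - {(a, True)}) = max (h - 1 - a) 1 + of_bool (even (h - a) = t)"
  proof -
    have "?U - {(a, True)} = {0..<a} \<times> {True} \<union> {Suc a..<h} \<times> UNIV"
      using Suc.prems by auto
    then show ?thesis
      using N_rung[OF Suc.prems] by simp
  qed
  show ?case
  proof (cases "Suc a < h")
    case True
    have "ladder_nbrs h t (a, False) \<inter> ?U = {(a, True), (Suc a, False)}"
      using Suc.prems True three_le_h by (auto simp: ladder_nbrs_def)
    then have "N (a, False) ?U = N (a, True) (?U - {(a, True)}) + N (Suc a, False) (?U - {(Suc a, False)})"
      by (rule N_step_two) (use Suc.prems in \<open>auto simp: ladder_vertices_def\<close>)
    moreover have "?U - {(Suc a, False)} = {Suc (Suc a)..<h} \<times> {False} \<union> {0..<h} \<times> {True}"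
      by auto
    moreover have "N (Suc a, False) ({Suc (Suc a)..<h} \<times> {False} \<union> {0..<h} \<times> {True})
        = (\<Sum>b\<in>{Suc a..<h}. max (h - 1 - b) 1 + of_bool (even (h - b) = t)) + of_bool t"
      using Suc.hyps(1)[of "Suc a"] Suc.hyps(2) Suc.prems True by simp
    ultimately show ?thesis
      using rung Suc.prems by (simp add: sum.atLeast_Suc_lessThan)
  next
    case False
    then have "h = Suc a"
      using Suc.prems by simp
    show ?thesis
    proof (cases t)
      case True
      have "ladder_nbrs h t (a, False) \<inter> ?U = {(a, True), (0, True)}"
        using Suc.prems \<open>h = Suc a\<close> True three_le_h by (auto simp: ladder_nbrs_def)
      then have "N (a, False) ?U = N (a, True) (?U - {(a, True)}) + N (0, True) (?U - {(0, True)})"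
        by (rule N_step_two) (use Suc.prems in \<open>auto simp: ladder_vertices_def\<close>)
      moreover have "?U - {(0, True)} = {Suc 0..<h} \<times> {True}"
        using \<open>h = Suc a\<close> by auto
      moreover have "N (0, True) ({Suc 0..<h} \<times> {True}) = 1"
        using True three_le_h by (intro N_rail_up) auto
      ultimately show ?thesis
        using rung \<open>h = Suc a\<close> True by simp
    next
      case False
      have "ladder_nbrs h t (a, False) \<inter> ?U = {(a, True)}"
        using Suc.prems \<open>h = Suc a\<close> False three_le_h by (auto simp: ladder_nbrs_def)
      then have "N (a, False) ?U = N (a, True) (?U - {(a, True)})"
        by (rule N_step_one) (use Suc.prems in \<open>auto simp: ladder_vertices_def\<close>)
      then show ?thesis
        using rung \<open>h = Suc a\<close> False by simp
    qed
  qed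
qed simp

lemma N_first_rung: "N (0, True) ({1..<h} \<times> UNIV) = 2 * (h - 1)"
proof -
  let ?B = "{1..<h} \<times> (UNIV :: bool set)"
  let ?m = "ladder_mirror h t"
  have "ladder_nbrs h t (0, True) \<inter> ?B = {(1, True), (h - 1, \<not> t)}"
    using three_le_h by (auto simp: ladder_nbrs_def)
  moreover have "(1, True) \<noteq> (h - 1, \<not> t)"
    using three_le_h by auto
  ultimately have "N (0, True) ?B = N (1, True) (?B - {(1, True)}) + N (h - 1, \<not> t) (?B - {(h - 1, \<not> t)})"
    by (rule N_step_two) (use three_le_h in \<open>auto simp: ladder_vertices_def\<close>)
  moreover have block: "N (1, True) (?B - {(1, True)}) = h - 1"
    using N_block[of 1 h True] three_le_h by simp
  moreover have "N (h - 1, \<not> t) (?B - {(h - 1, \<not> t)}) = N (1, True) (?B - {(1, True)})"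
  proof -
    have "N (h - 1, \<not> t) (?B - {(h - 1, \<not> t)}) = N (?m (h - 1, \<not> t)) (?m ` (?B - {(h - 1, \<not> t)}))"
      by (rule N_mirror) (use three_le_h in \<open>auto simp: ladder_vertices_def\<close>)
    also have "?m (h - 1, \<not> t) = (1, True)"
      using three_le_h by (auto simp: ladder_mirror_def)
    also have "?m ` (?B - {(h - 1, \<not> t)}) = ?m ` ?B - ?m ` {(h - 1, \<not> t)}"
      by (rule ladder_mirror_image_diff) (use three_le_h in \<open>auto simp: ladder_vertices_def\<close>)
    also have "?m ` ?B = ?B"
      using ladder_mirror_block[of 0] three_le_h by simp
    also have "?m ` {(h - 1, \<not> t)} = {(1, True)}"
      using three_le_h by (auto simp: ladder_mirror_def)
    finally show ?thesis .
  qed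
  ultimately show ?thesis
    by simp
qed

lemma N_wrap_first:
  "N (h - 1, t) (ladder_vertices h - {(0, False), (h - 1, t)})
    = N (1, False) (ladder_vertices h - {(0, False), (1, False)})"
proof -
  let ?V = "ladder_vertices h"
  let ?m = "ladder_mirror h t"
  have "N (h - 1, t) (?V - {(0, False), (h - 1, t)}) = N (?m (h - 1, t)) (?m ` (?V - {(0, False), (h - 1, t)}))"
    by (rule N_mirror) (use three_le_h in \<open>auto simp: ladder_vertices_def\<close>)
  also have "?m (h - 1, t) = (1, False)"
    using three_le_h by (auto simp: ladder_mirror_def)
  also have "?m ` (?V - {(0, False), (h - 1, t)}) = ?m ` ?V - ?m ` {(0, False), (h - 1, t)}"
    by (rule ladder_mirror_image_diff) (use three_le_h in \<open>auto simp: ladder_vertices_def\<close>)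
  also have "?m ` {(0, False), (h - 1, t)} = {(0, False), (1, False)}"
    using three_le_h by (auto simp: ladder_mirror_def)
  finally show ?thesis
    by (simp add: ladder_mirror_vertices)
qed

lemma N_start:
  "N (0, False) (ladder_vertices h - {(0, False)})
    = 2 * (\<Sum>b\<in>{1..<h}. max (h - 1 - b) 1 + of_bool (even (h - b) = t)) + 2 * of_bool t + 2 * (h - 1)"
proof -
  let ?U = "ladder_vertices h - {(0, False)}"
  have "ladder_nbrs h t (0, False) \<inter> ?U = {(0, True), (1, False), (h - 1, t)}"
    using three_le_h by (auto simp: ladder_nbrs_def ladder_vertices_def)
  moreover have "(0, True) \<noteq> (1, False)" "(0, True) \<noteq> (h - 1, t)" "(1, False) \<noteq> (h - 1, t)"
    using three_le_h by auto
  ultimately have "N (0, False) ?U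
      = N (0, True) (?U - {(0, True)}) + (N (1, False) (?U - {(1, False)}) + N (h - 1, t) (?U - {(h - 1, t)}))"
    using N_step[of 0 ?U False] three_le_h by (auto simp: ladder_vertices_def)
  moreover have "?U - {(0, True)} = {1..<h} \<times> UNIV"
    by (auto simp: ladder_vertices_def)
  moreover have "?U - {(1, False)} = {Suc 1..<h} \<times> {False} \<union> {0..<h} \<times> {True}"
    by (auto simp: ladder_vertices_def)
  moreover have "?U - {(h - 1, t)} = ladder_vertices h - {(0, False), (h - 1, t)}"
    "?U - {(1, False)} = ladder_vertices h - {(0, False), (1, False)}"
    by auto
  ultimately show ?thesis
    using N_first_rung N_wrap_first N_lower_rail[of 1] three_le_h by simp
qed

lemma ham_count_ladder:
  "ham_count (ladder h t) (0, False) (ladder_vertices h - {(0, False)})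
    = h^2 + 1 + of_bool (even h) + 2 * of_bool (odd h \<and> t)"
proof -
  have "(\<Sum>b\<in>{1..<h}. max (h - 1 - b) 1 + of_bool (even (h - b) = t))
      = (\<Sum>k\<in>{1..<h}. max (k - 1) 1 + of_bool (even k = t))"
    by (subst sum.atLeastLessThan_rev) (auto intro!: sum.cong)
  also have "\<dots> = (\<Sum>k\<in>{1..<h}. max (k - 1) 1) + (if t then (h - 1) div 2 else h div 2)"
    by (simp only: sum.distrib sum_parity_indicator)
  finally have count: "ham_count (ladder h t) (0, False) (ladder_vertices h - {(0, False)})
      = (h - 1) * (h - 2) + 2 + 2 * (if t then (h - 1) div 2 else h div 2) + 2 * of_bool t + 2 * (h - 1)"
    using N_start sum_max_pred_1[of h] three_le_h by simp
  consider k where "h = 2 * k + 4" | k where "h = 2 * k + 3"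
  proof (cases "even h")
    case True
    then have "h = 2 * (h div 2 - 2) + 4"
      using three_le_h by presburger
    then show thesis
      by (rule that(1))
  next
    case False
    then have "h = 2 * (h div 2 - 1) + 3"
      using three_le_h by presburger
    then show thesis
      by (rule that(2))
  qed
  then show ?thesis
  proof cases
    case 1
    then have "(h - 1) div 2 = k + 1" "h div 2 = k + 2" "h - 1 = 2 * k + 3" "h - 2 = 2 * k + 2"
      by auto
    with 1 count show ?thesis
      by (cases t) (simp_all add: algebra_simps power2_eq_square)
  next
    case 2
    then have "(h - 1) div 2 = k + 1" "h div 2 = k + 1" "h - 1 = 2 * k + 2" "h - 2 = 2 * k + 1"
      by auto
    with 2 count show ?thesis
      by (cases t) (simp_all add: algebra_simps power2_eq_square)
  qed
qed

end

section \<open>The maximum distance graph is a ladder\<close>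

definition max_distance_graph :: "nat \<Rightarrow> nat \<Rightarrow> nat \<Rightarrow> bool" where
  "max_distance_graph n x y \<longleftrightarrow> x \<noteq> y \<and> (n - 1) div 2 \<le> cdist n x y"

lemma cdist_commute: "cdist n x y = cdist n y x"
  by (simp add: cdist_def min.commute)

lemma cdist_eq_if_le:
  assumes "1 \<le> y" "y \<le> x" "x \<le> n"
  shows "cdist n x y = min (x - y) (n - (x - y))"
proof (cases "x = y")
  case False
  have "(int x - int y) mod int n = int (x - y)"
    using assms by (simp add: of_nat_diff mod_pos_pos_trivial)
  moreover have "(int y - int x) mod int n = int (n - (x - y))"
  proof -
    have "(int y - int x) mod int n = (int y - int x + int n) mod int n"
      by simp
    also have "int y - int x + int n = int (n - (x - y))"
      using assms by (simp add: of_nat_diff)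
    also have "int (n - (x - y)) mod int n = int (n - (x - y))"
      using assms False by (intro mod_pos_pos_trivial) auto
    finally show ?thesis .
  qed
  ultimately show ?thesis
    by (simp add: cdist_def min_def)
qed (simp add: cdist_def)

lemma cdist_le_half:
  assumes "x \<in> {1..n}" "y \<in> {1..n}"
  shows "cdist n x y \<le> n div 2"
proof -
  have "min (a - b) (n - (a - b)) \<le> n div 2" for a b :: nat
    by linarith
  then show ?thesis
    using assms cdist_eq_if_le[of y x n] cdist_eq_if_le[of x y n] cdist_commute[of n x y]
    by (cases "y \<le> x") (auto simp: min_def)
qed

lemma cdist_half_twice:
  assumes "x \<in> {1..2 * h}" "y \<in> {1..2 * h}" "z \<in> {1..2 * h}"
    and "cdist (2 * h) x y = h" "cdist (2 * h) y z = h"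
  shows "x = z"
proof -
  have "x - y = h \<or> y - x = h" "y - z = h \<or> z - y = h"
    using assms cdist_eq_if_le[of y x "2 * h"] cdist_eq_if_le[of x y "2 * h"]
      cdist_eq_if_le[of z y "2 * h"] cdist_eq_if_le[of y z "2 * h"]
      cdist_commute[of "2 * h" x y] cdist_commute[of "2 * h" y z]
    by (cases "y \<le> x"; cases "z \<le> y"; auto simp: min_def split: if_splits)+
  then show ?thesis
    using assms(1-3) by auto
qed

lemma max_distance_graph_iff:
  assumes "x \<in> {1..2 * h}" "y \<in> {1..2 * h}" "2 \<le> h"
  shows "max_distance_graph (2 * h) x y \<longleftrightarrow>
    h - 1 \<le> x - y \<and> x - y \<le> h + 1 \<or> h - 1 \<le> y - x \<and> y - x \<le> h + 1"
proof -
  have half: "(2 * h - 1) div 2 = h - 1"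
    by linarith
  show ?thesis
    using assms cdist_eq_if_le[of y x "2 * h"] cdist_eq_if_le[of x y "2 * h"] cdist_commute[of "2 * h" x y]
    unfolding max_distance_graph_def half by (cases "y \<le> x") (auto simp: min_def)
qed

lemma odd_diff_1_iff: "1 \<le> h \<Longrightarrow> odd (h - 1) \<longleftrightarrow> even (h :: nat)"
  by (cases h) auto

lemma ladder_same_half:
  assumes "3 \<le> h" "a < h" "b < h" "a \<noteq> b"
  shows "ladder h (even h) (a, q \<noteq> odd a) (b, q \<noteq> odd b) \<longleftrightarrow>
    a = h - 1 \<and> b = 0 \<or> a = 0 \<and> b = h - 1"
  using assms odd_diff_1_iff[of h] by auto

lemma ladder_other_half:
  assumes "3 \<le> h" "a < h" "b < h"
  shows "ladder h (even h) (a, q \<noteq> odd a) (b, (\<not> q) \<noteq> odd b) \<longleftrightarrow>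
    a = b \<or> b = Suc a \<or> a = Suc b"
  using assms odd_diff_1_iff[of h] by auto

(* x and x + h share a column and the row alternates along each half of [1, 2h]: steps of
   length h are rungs, steps of length h - 1 and h + 1 rails, and the steps between the ends
   of the two halves are the closing edges, which cross over iff h is even. *)
definition ladder_pos :: "nat \<Rightarrow> nat \<Rightarrow> nat \<times> bool" where
  "ladder_pos h x = ((x - 1) mod h, (h < x) \<noteq> odd ((x - 1) mod h))"

lemma ladder_pos_cases:
  assumes "x \<in> {1..2 * h}"
  obtains a q where "a < h" "x = a + 1 + (if q then h else 0)" "ladder_pos h x = (a, q \<noteq> odd a)"
proof (cases "h < x")
  case True
  then have "(x - 1) mod h = x - 1 - h" "x - 1 - h < h"
    using assms by (auto simp: mod_if)
  then show thesis
    using that[of "x - 1 - h" True] True by (simp add: ladder_pos_def)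
next
  case False
  then have "(x - 1) mod h = x - 1" "x - 1 < h"
    using assms by auto
  then show thesis
    using that[of "x - 1" False] False assms by (simp add: ladder_pos_def)
qed

lemma max_distance_graph_iff_ladder:
  assumes "3 \<le> h" "x \<in> {1..2 * h}" "y \<in> {1..2 * h}"
  shows "max_distance_graph (2 * h) x y \<longleftrightarrow> ladder h (even h) (ladder_pos h x) (ladder_pos h y)"
proof -
  obtain a q where a: "a < h" "x = a + 1 + (if q then h else 0)" "ladder_pos h x = (a, q \<noteq> odd a)"
    using ladder_pos_cases[OF assms(2)] .
  obtain b q' where b: "b < h" "y = b + 1 + (if q' then h else 0)" "ladder_pos h y = (b, q' \<noteq> odd b)"
    using ladder_pos_cases[OF assms(3)] .
  have dist: "max_distance_graph (2 * h) x y \<longleftrightarrow>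
      h - 1 \<le> x - y \<and> x - y \<le> h + 1 \<or> h - 1 \<le> y - x \<and> y - x \<le> h + 1"
    using assms by (intro max_distance_graph_iff) auto
  show ?thesis
  proof (cases "q' = q")
    case True
    then have "x - y = a - b" "y - x = b - a"
      using a(2) b(2) by auto
    moreover have "h - 1 \<le> a - b \<and> a - b \<le> h + 1 \<or> h - 1 \<le> b - a \<and> b - a \<le> h + 1
        \<longleftrightarrow> a = h - 1 \<and> b = 0 \<or> a = 0 \<and> b = h - 1"
      using a(1) b(1) assms(1) by arith
    moreover have "a = b \<Longrightarrow> \<not> ladder h (even h) (a, q \<noteq> odd a) (b, q \<noteq> odd b)"
      using assms(1) by auto
    ultimately show ?thesis
      using dist a(3) b(3) True ladder_same_half[OF assms(1) a(1) b(1), of q] assms(1)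
      by (cases "a = b") auto
  next
    case False
    then have "q' = (\<not> q)"
      by auto
    moreover have "x - y = (if q then a + h - b else 0)" "y - x = (if q then 0 else b + h - a)"
      using a(1,2) b(1,2) \<open>q' = (\<not> q)\<close> by auto
    moreover have "h - 1 \<le> a + h - b \<and> a + h - b \<le> h + 1 \<longleftrightarrow> a = b \<or> b = Suc a \<or> a = Suc b"
      "h - 1 \<le> b + h - a \<and> b + h - a \<le> h + 1 \<longleftrightarrow> a = b \<or> b = Suc a \<or> a = Suc b"
      using a(1) b(1) assms(1) by arith+
    ultimately show ?thesis
      using dist a(3) b(3) ladder_other_half[OF assms(1) a(1) b(1), of q] assms(1)
      by (cases q) auto
  qed
qed

lemma inj_on_ladder_pos: "inj_on (ladder_pos h) {1..2 * h}"
proof (rule inj_onI)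
  fix x y assume x: "x \<in> {1..2 * h}" and y: "y \<in> {1..2 * h}" and eq: "ladder_pos h x = ladder_pos h y"
  obtain a q where "x = a + 1 + (if q then h else 0)" "ladder_pos h x = (a, q \<noteq> odd a)"
    using ladder_pos_cases[OF x] .
  moreover obtain b q' where "y = b + 1 + (if q' then h else 0)" "ladder_pos h y = (b, q' \<noteq> odd b)"
    using ladder_pos_cases[OF y] .
  ultimately show "x = y"
    using eq by auto
qed

lemma ladder_pos_image: "ladder_pos h ` {1..2 * h} = ladder_vertices h"
proof (intro equalityI subsetI)
  fix v assume "v \<in> ladder_pos h ` {1..2 * h}"
  then obtain x where x: "x \<in> {1..2 * h}" "v = ladder_pos h x"
    by blast
  obtain a q where "a < h" "ladder_pos h x = (a, q \<noteq> odd a)"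
    using ladder_pos_cases[OF x(1)] by blast
  then show "v \<in> ladder_vertices h"
    using x(2) by (simp add: ladder_vertices_def)
next
  fix v assume "v \<in> ladder_vertices h"
  then obtain c r where v: "v = (c, r)" "c < h"
    by (auto simp: ladder_vertices_def)
  define x where "x = c + 1 + (if r \<noteq> odd c then h else 0)"
  have "(x - 1) mod h = c" "h < x \<longleftrightarrow> r \<noteq> odd c"
    using v(2) by (auto simp: x_def)
  then have "ladder_pos h x = v"
    using v(1) by (auto simp: ladder_pos_def)
  moreover have "x \<in> {1..2 * h}"
    using v(2) by (auto simp: x_def)
  ultimately show "v \<in> ladder_pos h ` {1..2 * h}"
    by blast
qed

lemma ham_count_max_distance_graph:
  assumes "3 \<le> h"
  shows "ham_count (max_distance_graph (2 * h)) 1 ({1..2 * h} - {1})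
    = ham_count (ladder h (even h)) (0, False) (ladder_vertices h - {(0, False)})"
proof -
  have "0 < h"
    using assms by simp
  then have V: "insert 1 ({1..2 * h} - {1}) = {1..2 * h}"
    by auto
  have "ham_count (max_distance_graph (2 * h)) 1 ({1..2 * h} - {1})
      = ham_count (ladder h (even h)) (ladder_pos h 1) (ladder_pos h ` ({1..2 * h} - {1}))"
  proof (rule ham_count_iso)
    show "inj_on (ladder_pos h) (insert 1 ({1..2 * h} - {1}))"
      unfolding V by (rule inj_on_ladder_pos)
    show "ladder h (even h) (ladder_pos h x) (ladder_pos h y) \<longleftrightarrow> max_distance_graph (2 * h) x y"
      if "x \<in> insert 1 ({1..2 * h} - {1})" "y \<in> insert 1 ({1..2 * h} - {1})" for x y
      using that max_distance_graph_iff_ladder[OF assms, of x y] unfolding V by simp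
  qed
  also have "ladder_pos h 1 = (0, False)"
    using \<open>0 < h\<close> by (simp add: ladder_pos_def)
  also have "ladder_pos h ` ({1..2 * h} - {1}) = ladder_pos h ` {1..2 * h} - ladder_pos h ` {1}"
    by (rule inj_on_image_set_diff[OF inj_on_ladder_pos]) (use \<open>0 < h\<close> in auto)
  also have "\<dots> = ladder_vertices h - {(0, False)}"
    using ladder_pos_image \<open>ladder_pos h 1 = (0, False)\<close> by simp
  finally show ?thesis .
qed

lemma latin_row_iff: "latin_row n s \<longleftrightarrow> distinct s \<and> set s = {1..n}"
  by (auto simp: latin_row_def dest: distinct_card)

lemma Min_eq_pred_iff:
  fixes M :: "nat set"
  assumes "finite M" "\<forall>d\<in>M. d \<le> k" "d0 \<in> M" "d0 \<noteq> k"
  shows "Min M = k - 1 \<longleftrightarrow> (\<forall>d\<in>M. k - 1 \<le> d)"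
proof
  assume lower: "\<forall>d\<in>M. k - 1 \<le> d"
  have "Min M \<in> M"
    using assms(1,3) by (intro Min_in) auto
  moreover have "Min M \<le> d0"
    using assms(1,3) by (rule Min_le)
  ultimately show "Min M = k - 1"
    using assms(2-4) lower by fastforce
next
  assume "Min M = k - 1"
  then show "\<forall>d\<in>M. k - 1 \<le> d"
    using Min_le[OF assms(1)] by metis
qed

lemma latin_row_not_two_half_steps:
  assumes "latin_row (2 * h) s" "2 \<le> h"
  shows "cdist (2 * h) (s ! 0) (s ! 1) \<noteq> h \<or> cdist (2 * h) (s ! 1) (s ! 2) \<noteq> h"
proof (rule ccontr)
  assume "\<not> ?thesis"
  moreover have "s ! 0 \<in> {1..2 * h}" "s ! 1 \<in> {1..2 * h}" "s ! 2 \<in> {1..2 * h}"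
    using assms nth_mem[of _ s] by (auto simp: latin_row_def)
  ultimately have "s ! 0 = s ! 2"
    using cdist_half_twice[of "s ! 0" h "s ! 1" "s ! 2"] by simp
  then show False
    using assms by (simp add: latin_row_def nth_eq_iff_index_eq)
qed

lemma inner_distance_eq_iff:
  assumes "latin_row (2 * h) s" "2 \<le> h"
  shows "inner_distance (2 * h) s = h - 1 \<longleftrightarrow> successively (max_distance_graph (2 * h)) s"
proof -
  let ?d = "\<lambda>j. cdist (2 * h) (s ! j) (s ! (j + 1))"
  let ?M = "{?d j | j. j + 1 < length s}"
  have s: "distinct s" "set s = {1..2 * h}" "length s = 2 * h"
    using assms(1) by (auto simp: latin_row_def)
  have "?M = ?d ` {..<length s - 1}"
    by force
  then have "finite ?M"
    by simp
  moreover have "\<forall>d\<in>?M. d \<le> h"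
  proof
    fix d assume "d \<in> ?M"
    then obtain j where j: "d = ?d j" "j + 1 < length s"
      by blast
    then have "s ! j \<in> {1..2 * h}" "s ! (j + 1) \<in> {1..2 * h}"
      using s(2) nth_mem[of j s] nth_mem[of "j + 1" s] by auto
    then show "d \<le> h"
      using cdist_le_half j(1) by fastforce
  qed
  moreover obtain d0 where "d0 \<in> ?M" "d0 \<noteq> h"
  proof -
    have "0 + 1 < length s" "1 + 1 < length s"
      using s(3) assms(2) by auto
    then have "?d 0 \<in> ?M" "?d 1 \<in> ?M"
      by blast+
    then show thesis
      using that latin_row_not_two_half_steps[OF assms] by (auto simp: numeral_2_eq_2)
  qed
  ultimately have "inner_distance (2 * h) s = h - 1 \<longleftrightarrow> (\<forall>d\<in>?M. h - 1 \<le> d)"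
    unfolding inner_distance_def by (rule Min_eq_pred_iff)
  also have "\<dots> \<longleftrightarrow> successively (max_distance_graph (2 * h)) s"
  proof -
    have "(2 * h - 1) div 2 = h - 1"
      by linarith
    moreover have "s ! j \<noteq> s ! Suc j" if "Suc j < length s" for j
      using that s(1) by (simp add: nth_eq_iff_index_eq)
    ultimately show ?thesis
      by (auto simp: successively_conv_nth max_distance_graph_def)
  qed
  finally show ?thesis .
qed

lemma P_eq_ham_count:
  assumes "2 \<le> h"
  shows "P (2 * h) = ham_count (max_distance_graph (2 * h)) 1 ({1..2 * h} - {1})"
proof -
  have "{s. latin_row (2 * h) s \<and> s ! 0 = 1 \<and> inner_distance (2 * h) s = 2 * h div 2 - 1}
      = {s. distinct s \<and> set s = {1..2 * h} \<and> s ! 0 = 1 \<and> successively (max_distance_graph (2 * h)) s}"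
  proof (intro Collect_cong)
    fix s
    have "2 * h div 2 - 1 = h - 1"
      by simp
    show "latin_row (2 * h) s \<and> s ! 0 = 1 \<and> inner_distance (2 * h) s = 2 * h div 2 - 1
      \<longleftrightarrow> distinct s \<and> set s = {1..2 * h} \<and> s ! 0 = 1 \<and> successively (max_distance_graph (2 * h)) s"
    proof (cases "latin_row (2 * h) s")
      case True
      then show ?thesis
        using inner_distance_eq_iff[OF True assms] latin_row_iff \<open>2 * h div 2 - 1 = h - 1\<close> by simp
    next
      case False
      then show ?thesis
        using latin_row_iff by blast
    qed
  qed
  also have "\<dots> = Cons 1 ` ham_paths (max_distance_graph (2 * h)) 1 ({1..2 * h} - {1})"
    using assms by (intro Cons_ham_paths[symmetric]) auto
  finally show ?thesis
    unfolding P_def ham_count_def by (simp add: card_image inj_on_def)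
qed

theorem mainTheorem6:
  fixes n :: nat
  assumes "n \<ge> 6" and "even n"
  shows "(n mod 4 = 0 \<longrightarrow> 4 * P n = n^2 + 8) \<and> (n mod 4 = 2 \<longrightarrow> 4 * P n = n^2 + 4)"
proof -
  obtain h where n: "n = 2 * h"
    using assms(2) by blast
  with assms(1) have h: "3 \<le> h"
    by simp
  interpret ladder_count h "even h"
    using h by unfold_locales
  have "P n = ham_count (max_distance_graph (2 * h)) 1 ({1..2 * h} - {1})"
    using P_eq_ham_count[of h] h n by simp
  also have "\<dots> = ham_count (ladder h (even h)) (0, False) (ladder_vertices h - {(0, False)})"
    by (rule ham_count_max_distance_graph[OF h])
  also have "\<dots> = h^2 + 1 + of_bool (even h)"
    using ham_count_ladder by simp
  finally have "P n = h^2 + 1 + of_bool (even h)" .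
  moreover have "n^2 = 4 * h^2"
    by (simp add: n power_mult_distrib)
  moreover have "n mod 4 = 0 \<longleftrightarrow> even h" "n mod 4 = 2 \<longleftrightarrow> odd h"
    using n by presburger+
  ultimately show ?thesis
    by auto
qed

end
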